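(* Let $A\in\mathcal{C}_n$ and $i,j\in\{1,\dots,n\}$. Then $A$ is irreducible with respect to $E_{ij}$ if and only if there exists a minimal zero $u$ of $A$ such that $(Au)_i=(Au)_j=0$ and $u_i+u_j>0$.
   Context: $\mathcal{C}_n$ denotes the cone of copositive matrices: real symmetric $n\times n$ matrices $A$ with $x^TAx\ge 0$ for all $x\in\mathbb{R}^n_+$. $E_{ij}$ is the $n\times n$ matrix with entries 1 at positions $(i,j)$ and $(j,i)$ and 0 elsewhere. For $\mathcal{M}\subset\mathcal{C}_n$ (or a single matrix $M$), $A$ is irreducible with respect to $\mathcal{M}$ if there do not exist $\gamma>0$ and $M\in\mathcal{M}\setminus\{0\}$ with $A-\gamma M\in\mathcal{C}_n$. A zero of $A$ is a nonzero $u\in\mathbb{R}^n_+$ with $u^TAu=0$; $\operatorname{Supp}(u)=\{i:u_i\ne0\}$; a zero $u$ is minimal if there is no zero $v$ with $\operatorname{Supp}(v)\subsetneq\operatorname{Supp}(u)$. *)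

theory Defs
  imports "HOL-Analysis.Analysis"
begin

definition copositive :: "real^'n^'n \<Rightarrow> bool" where
  "copositive A \<longleftrightarrow> transpose A = A \<and>
     (\<forall>x::real^'n. (\<forall>k. 0 \<le> x $ k) \<longrightarrow> 0 \<le> x \<bullet> (A *v x))"

definition Emat :: "'n \<Rightarrow> 'n \<Rightarrow> real^'n^'n" where
  "Emat i j = (\<chi> k l. if (k = i \<and> l = j) \<or> (k = j \<and> l = i) then 1 else 0)"

definition irreducible_wrt :: "real^'n^'n \<Rightarrow> (real^'n^'n) set \<Rightarrow> bool" where
  "irreducible_wrt A \<M> \<longleftrightarrow>
     \<not> (\<exists>\<gamma>::real. \<exists>M \<in> \<M> - {0}. \<gamma> > 0 \<and> copositive (A - \<gamma> *\<^sub>R M))"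

definition is_zero :: "real^'n^'n \<Rightarrow> real^'n \<Rightarrow> bool" where
  "is_zero A u \<longleftrightarrow> u \<noteq> 0 \<and> (\<forall>k. 0 \<le> u $ k) \<and> u \<bullet> (A *v u) = 0"

definition supp :: "real^'n \<Rightarrow> 'n set" where
  "supp u = {k. u $ k \<noteq> 0}"

definition minimal_zero :: "real^'n^'n \<Rightarrow> real^'n \<Rightarrow> bool" where
  "minimal_zero A u \<longleftrightarrow> is_zero A u \<and> \<not> (\<exists>v. is_zero A v \<and> supp v \<subset> supp u)"

end

(*
  If A - g E_ij is copositive for some g > 0 and u is a zero of A with (Au)_i = (Au)_j = 0,
  then u^T E_ij u >= 0 makes u a zero of A - g E_ij as well, so (A - g E_ij) u >= 0; its
  i-th and j-th entries are -g u_j and -g u_i, contradicting u_i + u_j > 0.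

  Conversely, if no minimal zero has this property, we show by induction over the faces
  {x >= 0. supp x <= S} that A - g E_ij is copositive on each face for all small g > 0.
  Without zeros on the face, A is strictly copositive there and compactness suffices.
  Otherwise take a minimal zero z on the face: by assumption, (E_ij z)_k > 0 implies
  (Az)_k > 0, so for small g the vector z is still a zero of B = A - g E_ij with Bz >= 0.
  Subtracting the largest multiple t z from an x with supp x = S leaves v >= 0 of smaller
  support, and x^T B x = v^T B v + 2t v^T B z >= v^T B v >= 0.
*)
theory Submission
  imports Defs
begin

lemma Emat_mult_vector_first: "(Emat i j *v x) $ i = (x $ j :: real)"
  by (cases "i = j") (simp_all add: Emat_def matrix_vector_mult_def mult_delta_left)

lemma Emat_mult_vector_second: "(Emat i j *v x) $ j = (x $ i :: real)"
  by (cases "i = j") (simp_all add: Emat_def matrix_vector_mult_def mult_delta_left)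

lemma Emat_mult_vector_other: "k \<noteq> i \<Longrightarrow> k \<noteq> j \<Longrightarrow> (Emat i j *v x) $ k = (0 :: real)"
  by (simp add: Emat_def matrix_vector_mult_def)

lemma Emat_mult_vector_nonneg: "\<forall>k. 0 \<le> x $ k \<Longrightarrow> 0 \<le> (Emat i j *v x) $ k"
  by (metis Emat_mult_vector_first Emat_mult_vector_other Emat_mult_vector_second order.refl)

lemma transpose_Emat: "transpose (Emat i j) = Emat i j"
  by (auto simp: Emat_def transpose_def vec_eq_iff)

lemma Emat_neq_0: "Emat i j \<noteq> 0"
  by (metis Emat_mult_vector_first axis_nth matrix_vector_mult_0 zero_index zero_neq_one)

lemma inner_nonneg_if_nonneg:
  fixes x y :: "real^'n"
  shows "\<forall>k. 0 \<le> x $ k \<Longrightarrow> \<forall>k. 0 \<le> y $ k \<Longrightarrow> 0 \<le> x \<bullet> y"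
  by (auto simp: inner_vec_def intro!: sum_nonneg)

lemma inner_mult_vector_commute:
  fixes B :: "real^'n^'n"
  assumes "transpose B = B"
  shows "u \<bullet> (B *v v) = v \<bullet> (B *v u)"
  by (metis assms dot_lmul_matrix inner_commute transpose_matrix_vector)

lemma quadratic_form_add_scaleR:
  fixes B :: "real^'n^'n"
  assumes "transpose B = B"
  shows "(v + t *\<^sub>R z) \<bullet> (B *v (v + t *\<^sub>R z)) =
    v \<bullet> (B *v v) + 2 * t * (v \<bullet> (B *v z)) + t\<^sup>2 * (z \<bullet> (B *v z))"
  using inner_mult_vector_commute[OF assms, of z v]
  by (simp add: matrix_vector_right_distrib inner_add_left inner_add_right power2_eq_square algebra_simps)

lemma quadratic_form_diff_scaleR:
  fixes A M :: "real^'n^'n"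
  shows "x \<bullet> ((A - g *\<^sub>R M) *v x) = x \<bullet> (A *v x) - g * (x \<bullet> (M *v x))"
  by (simp add: matrix_vector_mult_diff_rdistrib inner_diff_right scaleR_matrix_vector_assoc[symmetric]
      del: scaleR_matrix_vector_assoc)

lemma mult_vector_diff_scaleR_nth:
  fixes A M :: "real^'n^'n"
  shows "((A - g *\<^sub>R M) *v x) $ k = (A *v x) $ k - g * (M *v x) $ k"
  by (simp add: matrix_vector_mult_diff_rdistrib scaleR_matrix_vector_assoc[symmetric]
      del: scaleR_matrix_vector_assoc)

lemma transpose_diff_scaleR:
  fixes A M :: "real^'n^'n"
  assumes "transpose A = A" "transpose M = M"
  shows "transpose (A - g *\<^sub>R M) = A - g *\<^sub>R M"
  using assms by (simp add: transpose_def vec_eq_iff)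

lemma is_zero_inner_mult_nonneg:
  assumes cop: "copositive A" and u: "is_zero A u" and y: "\<forall>k. 0 \<le> y $ k"
  shows "0 \<le> y \<bullet> (A *v u)"
proof -
  have sym: "transpose A = A" using cop by (simp add: copositive_def)
  let ?f = "\<lambda>t. 2 * (y \<bullet> (A *v u)) + t * (y \<bullet> (A *v y))"
  have "0 \<le> ?f t" if "t > 0" for t
  proof -
    have "0 \<le> (u + t *\<^sub>R y) \<bullet> (A *v (u + t *\<^sub>R y))"
      using cop u y \<open>t > 0\<close> by (simp add: copositive_def is_zero_def)
    also have "\<dots> = t * ?f t"
      using u inner_mult_vector_commute[OF sym, of u y]
      by (simp add: quadratic_form_add_scaleR[OF sym] is_zero_def power2_eq_square algebra_simps)
    finally show ?thesis using \<open>t > 0\<close> by (simp add: zero_le_mult_iff)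
  qed
  then have "\<forall>\<^sub>F t in at_right 0. 0 \<le> ?f t"
    using eventually_at_right_less[of "0::real"] by (auto elim: eventually_mono)
  moreover have "(?f \<longlongrightarrow> 2 * (y \<bullet> (A *v u))) (at_right 0)"
    by (auto intro!: tendsto_eq_intros)
  ultimately show ?thesis
    using tendsto_lowerbound[of ?f _ "at_right 0" 0] by fastforce
qed

lemma is_zero_mult_nonneg:
  assumes "copositive A" and "is_zero A u"
  shows "0 \<le> (A *v u) $ k"
proof -
  have "\<forall>l. 0 \<le> axis k (1::real) $ l" by (simp add: axis_def)
  then show ?thesis using is_zero_inner_mult_nonneg[OF assms] by (fastforce simp: inner_axis')
qed

lemma is_zero_mult_eq_0:
  assumes cop: "copositive A" and u: "is_zero A u" and k: "u $ k \<noteq> 0"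
  shows "(A *v u) $ k = 0"
proof -
  have terms_nonneg: "\<And>l. 0 \<le> u $ l * (A *v u) $ l"
    using u is_zero_mult_nonneg[OF cop u] by (simp add: is_zero_def)
  have "(\<Sum>l\<in>UNIV. u $ l * (A *v u) $ l) = 0"
    using u by (simp add: is_zero_def inner_vec_def)
  then have "u $ k * (A *v u) $ k = 0"
    by (simp add: sum_nonneg_eq_0_iff terms_nonneg)
  with k show ?thesis by simp
qed

lemma minimal_zero_below:
  assumes "is_zero A u"
  shows "\<exists>w. minimal_zero A w \<and> supp w \<subseteq> supp u"
  using assms
proof (induction "card (supp u)" arbitrary: u rule: less_induct)
  case less
  show ?case
  proof (cases "minimal_zero A u")
    case False
    then obtain v where "is_zero A v" "supp v \<subset> supp u"
      using less.prems by (auto simp: minimal_zero_def)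
    with less.hyps[of v] show ?thesis
      by (meson finite psubset_card_mono psubset_imp_subset order.trans)
  qed blast
qed

lemma not_copositive_diff_Emat_if_zero:
  assumes cop: "copositive A" and u: "is_zero A u"
    and Au: "(A *v u) $ i = 0" "(A *v u) $ j = 0" "u $ i + u $ j > 0" and g: "g > 0"
  shows "\<not> copositive (A - g *\<^sub>R Emat i j)"
proof
  let ?B = "A - g *\<^sub>R Emat i j"
  assume copB: "copositive ?B"
  have u_nonneg: "\<forall>k. 0 \<le> u $ k" using u by (simp add: is_zero_def)
  have "0 \<le> u \<bullet> (Emat i j *v u)"
    using u_nonneg by (simp add: inner_nonneg_if_nonneg Emat_mult_vector_nonneg)
  moreover have "0 \<le> u \<bullet> (?B *v u)" using copB u_nonneg by (simp add: copositive_def)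
  ultimately have "u \<bullet> (?B *v u) = 0"
    using u g by (simp add: quadratic_form_diff_scaleR is_zero_def mult_le_0_iff)
  then have "is_zero ?B u" using u by (simp add: is_zero_def)
  then have "0 \<le> (?B *v u) $ i" "0 \<le> (?B *v u) $ j"
    using copB by (simp_all add: is_zero_mult_nonneg)
  then have "g * u $ j \<le> 0" "g * u $ i \<le> 0"
    using Au by (simp_all add: mult_vector_diff_scaleR_nth Emat_mult_vector_first Emat_mult_vector_second)
  with g Au(3) show False by (simp add: mult_le_0_iff)
qed

definition copositive_on :: "'n set \<Rightarrow> real^'n^'n \<Rightarrow> bool" where
  "copositive_on S B \<longleftrightarrow> (\<forall>x. (\<forall>k. 0 \<le> x $ k) \<longrightarrow> supp x \<subseteq> S \<longrightarrow> 0 \<le> x \<bullet> (B *v x))"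

lemma copositive_iff_copositive_on_UNIV:
  "copositive B \<longleftrightarrow> transpose B = B \<and> copositive_on UNIV B"
  by (simp add: copositive_def copositive_on_def)

lemma nonneg_decompose_along:
  fixes x z :: "real^'n"
  assumes x: "\<forall>k. 0 \<le> x $ k" and z: "\<forall>k. 0 \<le> z $ k" "z \<noteq> 0" and sub: "supp z \<subseteq> supp x"
  obtains t v k where "0 < t" "\<forall>k. 0 \<le> v $ k" "x = v + t *\<^sub>R z"
    and "k \<in> supp x" "supp v \<subseteq> supp x - {k}"
proof -
  let ?ratio = "\<lambda>k. x $ k / z $ k"
  define k where "k = arg_min_on ?ratio (supp z)"
  define t where "t = ?ratio k"
  have "supp z \<noteq> {}" using z by (auto simp: supp_def vec_eq_iff)
  then have k: "k \<in> supp z" and t_le: "\<And>l. l \<in> supp z \<Longrightarrow> t \<le> ?ratio l"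
    using arg_min_if_finite[of "supp z" ?ratio] by (auto simp: k_def t_def not_less)
  have pos: "0 < z $ k" "0 < x $ k"
    using k sub x z by (auto simp: supp_def order.strict_iff_order)
  define v where "v = x - t *\<^sub>R z"
  have "0 \<le> v $ l" for l
  proof (cases "l \<in> supp z")
    case True
    then have "0 < z $ l" using z by (auto simp: supp_def order.strict_iff_order)
    with t_le[OF True] show ?thesis by (simp add: v_def pos_le_divide_eq)
  qed (simp add: v_def supp_def x)
  moreover have "supp v \<subseteq> supp x - {k}"
    using sub pos by (auto simp: supp_def v_def t_def)
  moreover have "0 < t" using pos by (simp add: t_def)
  moreover have "x = v + t *\<^sub>R z" by (simp add: v_def)
  ultimately show ?thesis using that k sub by blast
qed

lemma quadratic_form_le_add_zero_direction:
  fixes B :: "real^'n^'n"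
  assumes "transpose B = B" "\<forall>k. 0 \<le> v $ k" "0 \<le> t"
    and "\<forall>k. 0 \<le> (B *v z) $ k" "z \<bullet> (B *v z) = 0"
  shows "v \<bullet> (B *v v) \<le> (v + t *\<^sub>R z) \<bullet> (B *v (v + t *\<^sub>R z))"
  using assms inner_nonneg_if_nonneg[of v "B *v z"] by (simp add: quadratic_form_add_scaleR)

lemma copositive_on_if_zero_direction:
  fixes B :: "real^'n^'n"
  assumes sym: "transpose B = B" and z: "\<forall>k. 0 \<le> z $ k" "z \<noteq> 0" "supp z \<subseteq> S"
    and Bz: "\<forall>k. 0 \<le> (B *v z) $ k" "z \<bullet> (B *v z) = 0"
    and faces: "\<forall>k\<in>S. copositive_on (S - {k}) B"
  shows "copositive_on S B"
  unfolding copositive_on_def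
proof (intro allI impI)
  fix x :: "real^'n" assume x: "\<forall>k. 0 \<le> x $ k" and "supp x \<subseteq> S"
  show "0 \<le> x \<bullet> (B *v x)"
  proof (cases "supp x = S")
    case True
    then obtain t v k where decomp: "0 < t" "\<forall>k. 0 \<le> v $ k" "x = v + t *\<^sub>R z"
      and "k \<in> S" "supp v \<subseteq> S - {k}"
      using nonneg_decompose_along[OF x z(1,2)] z(3) by metis
    then have "0 \<le> v \<bullet> (B *v v)" using faces by (simp add: copositive_on_def)
    also have "\<dots> \<le> x \<bullet> (B *v x)"
      using quadratic_form_le_add_zero_direction[OF sym decomp(2) _ Bz] decomp by simp
    finally show ?thesis .
  next
    case False
    then obtain k where "k \<in> S" "supp x \<subseteq> S - {k}" using \<open>supp x \<subseteq> S\<close> by blast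
    then show ?thesis using faces x by (simp add: copositive_on_def)
  qed
qed

lemma strictly_copositive_on_quadratic_bound:
  fixes A :: "real^'n^'n"
  assumes pos: "\<And>x. \<forall>k. 0 \<le> x $ k \<Longrightarrow> supp x \<subseteq> S \<Longrightarrow> x \<noteq> 0 \<Longrightarrow> 0 < x \<bullet> (A *v x)"
  obtains m where "0 < m"
    and "\<And>x. \<forall>k. 0 \<le> x $ k \<Longrightarrow> supp x \<subseteq> S \<Longrightarrow> m * (norm x)\<^sup>2 \<le> x \<bullet> (A *v x)"
proof -
  define K where "K = {y::real^'n. norm y = 1 \<and> (\<forall>k. 0 \<le> y $ k) \<and> supp y \<subseteq> S}"
  have "\<exists>m>0. \<forall>y\<in>K. m \<le> y \<bullet> (A *v y)"
  proof (cases "K = {}")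
    case False
    have "K = sphere 0 1 \<inter> {y. \<forall>k. 0 \<le> y $ k} \<inter> {y. \<forall>k. k \<notin> S \<longrightarrow> y $ k = 0}"
      by (auto simp: K_def supp_def)
    moreover have "closed {y::real^'n. \<forall>k. 0 \<le> y $ k}"
      and "closed {y::real^'n. \<forall>k. k \<notin> S \<longrightarrow> y $ k = 0}"
      by (intro closed_Collect_all closed_Collect_imp closed_Collect_le closed_Collect_eq
          continuous_intros; simp)+
    ultimately have "compact K" by (simp add: compact_Int_closed)
    moreover have "continuous_on K (\<lambda>y. y \<bullet> (A *v y))"
      by (intro continuous_intros matrix_vector_mult_linear_continuous_on)
    ultimately obtain y0 where "y0 \<in> K" "\<forall>y\<in>K. y0 \<bullet> (A *v y0) \<le> y \<bullet> (A *v y)"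
      using continuous_attains_inf False by blast
    moreover have "0 < y0 \<bullet> (A *v y0)"
      using pos \<open>y0 \<in> K\<close> unfolding K_def
      by (metis (mono_tags) mem_Collect_eq norm_zero zero_neq_one)
    ultimately show ?thesis by blast
  qed (intro exI[of _ 1], simp)
  then obtain m where m: "0 < m" "\<forall>y\<in>K. m \<le> y \<bullet> (A *v y)" by blast
  have "m * (norm x)\<^sup>2 \<le> x \<bullet> (A *v x)" if x: "\<forall>k. 0 \<le> x $ k" "supp x \<subseteq> S" for x
  proof (cases "x = 0")
    case False
    define y where "y = (1 / norm x) *\<^sub>R x"
    have "y \<in> K" using x False by (auto simp: K_def y_def supp_def)
    then have "(norm x)\<^sup>2 * m \<le> (norm x)\<^sup>2 * (y \<bullet> (A *v y))"
      using m by (simp add: mult_left_mono)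
    also have "\<dots> = x \<bullet> (A *v x)"
      using False by (simp add: y_def power2_eq_square matrix_vector_mult_scaleR)
    finally show ?thesis by (simp add: mult.commute)
  qed simp
  with m(1) show thesis using that by blast
qed

lemma eventually_copositive_on_diff:
  fixes A M :: "real^'n^'n"
  assumes "\<And>x. \<forall>k. 0 \<le> x $ k \<Longrightarrow> supp x \<subseteq> S \<Longrightarrow> x \<noteq> 0 \<Longrightarrow> 0 < x \<bullet> (A *v x)"
  shows "\<forall>\<^sub>F g in at_right 0. copositive_on S (A - g *\<^sub>R M)"
proof -
  obtain m where m: "0 < m"
    "\<And>x. \<forall>k. 0 \<le> x $ k \<Longrightarrow> supp x \<subseteq> S \<Longrightarrow> m * (norm x)\<^sup>2 \<le> x \<bullet> (A *v x)"
    using strictly_copositive_on_quadratic_bound[OF assms] by blast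
  obtain C where C: "0 < C" "\<And>x. norm (M *v x) \<le> norm x * C"
    using bounded_linear.pos_bounded[OF matrix_vector_mul_bounded_linear] by blast
  have "copositive_on S (A - g *\<^sub>R M)" if g: "0 < g" "g < m / C" for g
    unfolding copositive_on_def
  proof (intro allI impI)
    fix x :: "real^'n" assume x: "\<forall>k. 0 \<le> x $ k" "supp x \<subseteq> S"
    have "x \<bullet> (M *v x) \<le> norm x * norm (M *v x)"
      using Cauchy_Schwarz_ineq2[of x "M *v x"] by linarith
    also have "\<dots> \<le> C * (norm x)\<^sup>2"
      using C(2)[of x] mult_left_mono[of "norm (M *v x)" "norm x * C" "norm x"]
      by (simp add: power2_eq_square algebra_simps)
    finally have "g * (x \<bullet> (M *v x)) \<le> (g * C) * (norm x)\<^sup>2"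
      using g by (simp add: mult_left_mono)
    also have "\<dots> \<le> m * (norm x)\<^sup>2"
      using g C by (simp add: mult_right_mono pos_less_divide_eq less_imp_le)
    also have "\<dots> \<le> x \<bullet> (A *v x)" using m x by blast
    finally show "0 \<le> x \<bullet> ((A - g *\<^sub>R M) *v x)" by (simp add: quadratic_form_diff_scaleR)
  qed
  then show ?thesis
    unfolding eventually_at_right_field using m C by (intro exI[of _ "m / C"]) auto
qed

context
  fixes A :: "real^'n^'n" and i j :: 'n
  assumes cop: "copositive A"
    and no_witness: "\<not> (\<exists>u. minimal_zero A u \<and> (A *v u) $ i = 0 \<and> (A *v u) $ j = 0 \<and> u $ i + u $ j > 0)"
begin

lemma minimal_zero_mult_pos_if_Emat_mult_pos:
  assumes z: "minimal_zero A z" and pos: "0 < (Emat i j *v z) $ k"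
  shows "0 < (A *v z) $ k"
proof -
  have zero: "is_zero A z" using z by (simp add: minimal_zero_def)
  then have z_nonneg: "\<forall>l. 0 \<le> z $ l" by (simp add: is_zero_def)
  have "(A *v z) $ k \<noteq> 0"
  proof
    assume Azk: "(A *v z) $ k = 0"
    have "k = i \<or> k = j" using pos Emat_mult_vector_other by force
    then have "(A *v z) $ i = 0 \<and> (A *v z) $ j = 0 \<and> z $ i + z $ j > 0"
    proof
      assume "k = i"
      then have "0 < z $ j" using pos by (simp add: Emat_mult_vector_first)
      with \<open>k = i\<close> Azk z_nonneg show ?thesis
        using is_zero_mult_eq_0[OF cop zero, of j] by (simp add: add_nonneg_pos)
    next
      assume "k = j"
      then have "0 < z $ i" using pos by (simp add: Emat_mult_vector_second)
      with \<open>k = j\<close> Azk z_nonneg show ?thesis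
        using is_zero_mult_eq_0[OF cop zero, of i] by (simp add: add_pos_nonneg)
    qed
    with no_witness z show False by blast
  qed
  with is_zero_mult_nonneg[OF cop zero] show ?thesis by (simp add: order.strict_iff_order)
qed

lemma minimal_zero_quadratic_Emat_eq_0:
  assumes z: "minimal_zero A z"
  shows "z \<bullet> (Emat i j *v z) = 0"
proof -
  have zero: "is_zero A z" using z by (simp add: minimal_zero_def)
  have "z $ k * (Emat i j *v z) $ k = 0" for k
  proof (cases "z $ k = 0")
    case False
    then have "(A *v z) $ k = 0" using is_zero_mult_eq_0[OF cop zero] by blast
    then have "\<not> 0 < (Emat i j *v z) $ k" using minimal_zero_mult_pos_if_Emat_mult_pos[OF z] by force
    moreover have "0 \<le> (Emat i j *v z) $ k"
      using zero by (simp add: is_zero_def Emat_mult_vector_nonneg)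
    ultimately show ?thesis by simp
  qed simp
  then show ?thesis unfolding inner_vec_def inner_real_def by (simp add: sum.neutral)
qed

lemma eventually_Emat_mult_le:
  assumes z: "minimal_zero A z"
  shows "\<forall>\<^sub>F g in at_right 0. \<forall>k. g * (Emat i j *v z) $ k \<le> (A *v z) $ k"
proof (rule eventually_all_finite)
  fix k
  have zero: "is_zero A z" using z by (simp add: minimal_zero_def)
  show "\<forall>\<^sub>F g in at_right 0. g * (Emat i j *v z) $ k \<le> (A *v z) $ k"
  proof (cases "0 < (Emat i j *v z) $ k")
    case True
    have "((\<lambda>g. g * (Emat i j *v z) $ k) \<longlongrightarrow> 0) (at_right 0)"
      by (intro tendsto_mult_left_zero tendsto_ident_at)
    from order_tendstoD(2)[OF this minimal_zero_mult_pos_if_Emat_mult_pos[OF z True]] show ?thesis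
      by (auto elim: eventually_mono)
  next
    case False
    moreover have "0 \<le> (Emat i j *v z) $ k"
      using zero by (simp add: is_zero_def Emat_mult_vector_nonneg)
    ultimately have "(Emat i j *v z) $ k = 0" by simp
    with is_zero_mult_nonneg[OF cop zero] show ?thesis by simp
  qed
qed

lemma eventually_copositive_on_diff_Emat:
  "\<forall>\<^sub>F g in at_right 0. copositive_on S (A - g *\<^sub>R Emat i j)"
  using finite[of S]
proof (induction rule: finite_psubset_induct)
  case (psubset S)
  show ?case
  proof (cases "\<exists>u. is_zero A u \<and> supp u \<subseteq> S")
    case True
    then obtain z where z: "minimal_zero A z" "supp z \<subseteq> S"
      using minimal_zero_below by (meson order.trans)
    then have z_nonneg: "\<forall>k. 0 \<le> z $ k" and "z \<noteq> 0" and Az: "z \<bullet> (A *v z) = 0"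
      by (simp_all add: minimal_zero_def is_zero_def)
    have "\<forall>\<^sub>F g in at_right 0. \<forall>k\<in>S. copositive_on (S - {k}) (A - g *\<^sub>R Emat i j)"
      using psubset.IH by (intro eventually_ball_finite) auto
    with eventually_Emat_mult_le[OF z(1)] show ?thesis
    proof eventually_elim
      case (elim g)
      have "transpose (A - g *\<^sub>R Emat i j) = A - g *\<^sub>R Emat i j"
        using cop by (simp add: copositive_def transpose_diff_scaleR transpose_Emat)
      then show ?case
        using copositive_on_if_zero_direction[OF _ z_nonneg \<open>z \<noteq> 0\<close> z(2) _ _ elim(2)]
          elim(1) Az
        by (simp add: mult_vector_diff_scaleR_nth quadratic_form_diff_scaleR
            minimal_zero_quadratic_Emat_eq_0[OF z(1)])
    qed
  next
    case False
    have "0 < x \<bullet> (A *v x)" if "\<forall>k. 0 \<le> x $ k" "supp x \<subseteq> S" "x \<noteq> 0" for x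
    proof -
      have "x \<bullet> (A *v x) \<noteq> 0" using that False by (auto simp: is_zero_def)
      moreover have "0 \<le> x \<bullet> (A *v x)" using that cop by (simp add: copositive_def)
      ultimately show ?thesis by simp
    qed
    then show ?thesis by (rule eventually_copositive_on_diff)
  qed
qed

lemma copositive_diff_Emat:
  obtains g where "0 < g" "copositive (A - g *\<^sub>R Emat i j)"
proof -
  have "\<forall>\<^sub>F g in at_right 0. 0 < g \<and> copositive_on UNIV (A - g *\<^sub>R Emat i j)"
    using eventually_at_right_less eventually_copositive_on_diff_Emat by (rule eventually_conj)
  then obtain g where "0 < g" "copositive_on UNIV (A - g *\<^sub>R Emat i j)"
    using eventually_happens'[OF trivial_limit_at_right_real] by blast
  moreover have "transpose (A - g *\<^sub>R Emat i j) = A - g *\<^sub>R Emat i j"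
    using cop by (simp add: copositive_def transpose_diff_scaleR transpose_Emat)
  ultimately show thesis using that by (simp add: copositive_iff_copositive_on_UNIV)
qed

end

theorem lemma4p1:
  fixes A :: "real^'n^'n" and i j :: 'n
  assumes "copositive A"
  shows "irreducible_wrt A {Emat i j} \<longleftrightarrow>
    (\<exists>u. minimal_zero A u \<and> (A *v u) $ i = 0 \<and> (A *v u) $ j = 0 \<and> u $ i + u $ j > 0)"
proof
  assume irreducible: "irreducible_wrt A {Emat i j}"
  show "\<exists>u. minimal_zero A u \<and> (A *v u) $ i = 0 \<and> (A *v u) $ j = 0 \<and> u $ i + u $ j > 0"
  proof (rule ccontr)
    assume "\<not> ?thesis"
    then obtain g where "0 < g" "copositive (A - g *\<^sub>R Emat i j)"
      using copositive_diff_Emat[OF assms] by blast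
    with irreducible Emat_neq_0[of i j] show False by (auto simp: irreducible_wrt_def)
  qed
next
  assume "\<exists>u. minimal_zero A u \<and> (A *v u) $ i = 0 \<and> (A *v u) $ j = 0 \<and> u $ i + u $ j > 0"
  then obtain u where "is_zero A u" "(A *v u) $ i = 0" "(A *v u) $ j = 0" "u $ i + u $ j > 0"
    by (auto simp: minimal_zero_def)
  with not_copositive_diff_Emat_if_zero[OF assms] show "irreducible_wrt A {Emat i j}"
    by (auto simp: irreducible_wrt_def)
qed

end
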